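(* Let $k\ge 1$ and $r\ge 0$ be integers and let $G=(V,E)$ be a $(k+r)$-regular graph. A set $S\subseteq V$ is a $k$-conversion set of $G$ if and only if $G[V-S]$ is $r$-degenerate.
   Context: For a graph $G=(V,E)$, a positive integer $k$ and a set $S_0\subseteq V$, the irreversible $k$-threshold conversion process is defined by: for $t=1,2,\dots$, $S_t$ is obtained from $S_{t-1}$ by adjoining all vertices having at least $k$ neighbours in $S_{t-1}$. The set $S_0$ is a $k$-conversion set of $G$ if $S_t=V$ for some $t\ge 0$. A graph is $r$-degenerate if every (nonempty) induced subgraph of it has a vertex of degree at most $r$. *)

theory Defs
  imports Main
begin

definition simple_graph :: "'a set \<Rightarrow> ('a \<Rightarrow> 'a \<Rightarrow> bool) \<Rightarrow> bool" where
  "simple_graph V E \<longleftrightarrow> finite V \<and> (\<forall>u v. E u v \<longrightarrow> u \<in> V \<and> v \<in> V) \<and>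
     (\<forall>u v. E u v \<longrightarrow> E v u) \<and> (\<forall>v. \<not> E v v)"

definition neighbours :: "'a set \<Rightarrow> ('a \<Rightarrow> 'a \<Rightarrow> bool) \<Rightarrow> 'a \<Rightarrow> 'a set" where
  "neighbours V E v = {u \<in> V. E v u}"

definition regular :: "'a set \<Rightarrow> ('a \<Rightarrow> 'a \<Rightarrow> bool) \<Rightarrow> nat \<Rightarrow> bool" where
  "regular V E d \<longleftrightarrow> (\<forall>v\<in>V. card (neighbours V E v) = d)"

definition conv_step :: "'a set \<Rightarrow> ('a \<Rightarrow> 'a \<Rightarrow> bool) \<Rightarrow> nat \<Rightarrow> 'a set \<Rightarrow> 'a set" where
  "conv_step V E k S = S \<union> {v \<in> V. k \<le> card (neighbours V E v \<inter> S)}"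

definition conversion_set :: "'a set \<Rightarrow> ('a \<Rightarrow> 'a \<Rightarrow> bool) \<Rightarrow> nat \<Rightarrow> 'a set \<Rightarrow> bool" where
  "conversion_set V E k S0 \<longleftrightarrow> S0 \<subseteq> V \<and> (\<exists>t. (conv_step V E k ^^ t) S0 = V)"

definition degenerate :: "'a set \<Rightarrow> ('a \<Rightarrow> 'a \<Rightarrow> bool) \<Rightarrow> nat \<Rightarrow> bool" where
  "degenerate V E r \<longleftrightarrow>
     (\<forall>W. W \<subseteq> V \<and> W \<noteq> {} \<longrightarrow> (\<exists>v\<in>W. card (neighbours V E v \<inter> W) \<le> r))"

definition induced :: "'a set \<Rightarrow> ('a \<Rightarrow> 'a \<Rightarrow> bool) \<Rightarrow> 'a \<Rightarrow> 'a \<Rightarrow> bool" where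
  "induced W E = (\<lambda>u v. E u v \<and> u \<in> W \<and> v \<in> W)"

end

theory Submission
  imports Defs
begin

text \<open>
  In any finite graph, S is a k-conversion set iff every nonempty W \<subseteq> V - S contains a
  vertex with at least k neighbours outside W: such a W whose vertices all have fewer than
  k outside neighbours is never entered by the process, while otherwise the uninfected set
  W = V - S_t always loses a vertex, so the process fills V within card V steps.
  In a (k + r)-regular graph, having at least k neighbours outside W is the same as having
  at most r neighbours inside W, i.e. a vertex of degree at most r in G[W].
\<close>

lemma finite_neighbours: "finite V \<Longrightarrow> finite (neighbours V E v)"
  unfolding neighbours_def by simp

lemma conv_step_inflationary: "T \<subseteq> conv_step V E k T"
  unfolding conv_step_def by blast

lemma conv_step_subset: "T \<subseteq> V \<Longrightarrow> conv_step V E k T \<subseteq> V"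
  unfolding conv_step_def by blast

lemma funpow_strictly_inflationary_reaches:
  assumes "finite V" "X0 \<subseteq> V"
    and closed: "\<And>X. X0 \<subseteq> X \<Longrightarrow> X \<subseteq> V \<Longrightarrow> X \<subseteq> f X \<and> f X \<subseteq> V"
    and grows: "\<And>X. X0 \<subseteq> X \<Longrightarrow> X \<subset> V \<Longrightarrow> X \<subset> f X"
  shows "(f ^^ card V) X0 = V"
proof -
  have bounds: "X0 \<subseteq> (f ^^ t) X0 \<and> (f ^^ t) X0 \<subseteq> V" for t
  proof (induction t)
    case 0
    show ?case using assms(2) by simp
  next
    case (Suc t)
    then show ?case using closed[of "(f ^^ t) X0"] by auto
  qed
  have "(f ^^ t) X0 = V \<or> t \<le> card ((f ^^ t) X0)" for t
  proof (induction t)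
    case 0
    show ?case by simp
  next
    case (Suc t)
    let ?X = "(f ^^ t) X0"
    show ?case
    proof (cases "?X = V")
      case True
      then have "f ?X = V" using closed[of ?X] assms(2) by auto
      then show ?thesis by simp
    next
      case False
      then have "?X \<subset> V" using bounds[of t] by (simp add: psubset_eq)
      then have "?X \<subset> f ?X" using grows bounds[of t] by simp
      moreover have "finite (f ?X)"
        using bounds[of "Suc t"] \<open>finite V\<close> by (metis finite_subset funpow.simps(2) o_apply)
      ultimately have "card ?X < card (f ?X)" by (rule psubset_card_mono[rotated])
      then show ?thesis using Suc.IH False by simp
    qed
  qed
  then have "card V \<le> card ((f ^^ card V) X0) \<or> (f ^^ card V) X0 = V" by blast
  then show ?thesis using bounds[of "card V"] \<open>finite V\<close> by (metis card_subset_eq card_mono antisym)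
qed

lemma conv_step_funpow_disjoint:
  assumes "finite V" "S \<inter> W = {}"
    and few_outside: "\<And>v. v \<in> W \<Longrightarrow> card (neighbours V E v - W) < k"
  shows "(conv_step V E k ^^ t) S \<inter> W = {}"
proof (induction t)
  case 0
  show ?case using assms(2) by simp
next
  case (Suc t)
  let ?T = "(conv_step V E k ^^ t) S"
  show ?case
  proof (rule ccontr)
    assume "(conv_step V E k ^^ Suc t) S \<inter> W \<noteq> {}"
    then obtain v where v: "v \<in> conv_step V E k ?T" "v \<in> W" by auto
    then have "k \<le> card (neighbours V E v \<inter> ?T)"
      using Suc.IH unfolding conv_step_def by auto
    also have "\<dots> \<le> card (neighbours V E v - W)"
      using Suc.IH finite_neighbours[OF \<open>finite V\<close>] by (intro card_mono) auto
    finally show False using few_outside[OF v(2)] by simp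
  qed
qed

lemma conversion_set_iff_many_outside:
  assumes "finite V" "S \<subseteq> V"
  shows "conversion_set V E k S \<longleftrightarrow>
    (\<forall>W. W \<subseteq> V - S \<and> W \<noteq> {} \<longrightarrow> (\<exists>v\<in>W. k \<le> card (neighbours V E v - W)))"
    (is "_ \<longleftrightarrow> ?many_outside")
proof
  assume "conversion_set V E k S"
  then obtain t where t: "(conv_step V E k ^^ t) S = V"
    unfolding conversion_set_def by blast
  show ?many_outside
  proof (intro allI impI)
    fix W assume W: "W \<subseteq> V - S \<and> W \<noteq> {}"
    show "\<exists>v\<in>W. k \<le> card (neighbours V E v - W)"
    proof (rule ccontr)
      assume "\<not> ?thesis"
      then have "card (neighbours V E v - W) < k" if "v \<in> W" for v
        using that not_le by blast
      moreover have "S \<inter> W = {}" using W by blast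
      ultimately have "(conv_step V E k ^^ t) S \<inter> W = {}"
        using conv_step_funpow_disjoint[OF \<open>finite V\<close>] by blast
      with t W show False by blast
    qed
  qed
next
  assume many_outside: ?many_outside
  have grows: "X \<subset> conv_step V E k X" if "S \<subseteq> X" "X \<subset> V" for X
  proof -
    have "V - X \<subseteq> V - S \<and> V - X \<noteq> {}" using that by blast
    then obtain v where v: "v \<in> V - X" "k \<le> card (neighbours V E v - (V - X))"
      using many_outside by blast
    have "neighbours V E v - (V - X) = neighbours V E v \<inter> X"
      unfolding neighbours_def by blast
    then have "v \<in> conv_step V E k X" using v unfolding conv_step_def by simp
    with v(1) show ?thesis using conv_step_inflationary[of X V E k] by blast
  qed
  have "(conv_step V E k ^^ card V) S = V"
    by (rule funpow_strictly_inflationary_reaches[OF assms _ grows])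
      (simp add: conv_step_inflationary conv_step_subset)
  then show "conversion_set V E k S"
    unfolding conversion_set_def using \<open>S \<subseteq> V\<close> by blast
qed

lemma regular_many_outside_iff_few_inside:
  assumes "finite V" "regular V E (k + r)" "v \<in> V"
  shows "k \<le> card (neighbours V E v - W) \<longleftrightarrow> card (neighbours V E v \<inter> W) \<le> r"
proof -
  have "card (neighbours V E v - W) = (k + r) - card (neighbours V E v \<inter> W)"
    using assms unfolding regular_def by (simp add: card_Diff_subset_Int finite_neighbours)
  moreover have "card (neighbours V E v \<inter> W) \<le> k + r"
    using assms unfolding regular_def by (metis Int_lower1 card_mono finite_neighbours)
  ultimately show ?thesis by linarith
qed

lemma degenerate_induced_iff:
  assumes "U \<subseteq> V"
  shows "degenerate U (induced U E) r \<longleftrightarrow>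
    (\<forall>W. W \<subseteq> U \<and> W \<noteq> {} \<longrightarrow> (\<exists>v\<in>W. card (neighbours V E v \<inter> W) \<le> r))"
proof -
  have "neighbours U (induced U E) v \<inter> W = neighbours V E v \<inter> W" if "W \<subseteq> U" "v \<in> W" for v W
    using that assms unfolding neighbours_def induced_def by auto
  then show ?thesis unfolding degenerate_def by (intro all_cong1 imp_cong refl bex_cong) auto
qed

theorem proposition4p1:
  fixes V :: "'a set" and E :: "'a \<Rightarrow> 'a \<Rightarrow> bool" and k r :: nat and S :: "'a set"
  assumes "simple_graph V E"
    and "k \<ge> 1"
    and "regular V E (k + r)"
    and "S \<subseteq> V"
  shows "conversion_set V E k S \<longleftrightarrow> degenerate (V - S) (induced (V - S) E) r"
proof -
  have "finite V" using assms(1) unfolding simple_graph_def by blast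
  have "conversion_set V E k S \<longleftrightarrow>
      (\<forall>W. W \<subseteq> V - S \<and> W \<noteq> {} \<longrightarrow> (\<exists>v\<in>W. k \<le> card (neighbours V E v - W)))"
    using \<open>finite V\<close> assms(4) by (rule conversion_set_iff_many_outside)
  also have "\<dots> \<longleftrightarrow>
      (\<forall>W. W \<subseteq> V - S \<and> W \<noteq> {} \<longrightarrow> (\<exists>v\<in>W. card (neighbours V E v \<inter> W) \<le> r))"
    using regular_many_outside_iff_few_inside[OF \<open>finite V\<close> assms(3)]
    by (intro all_cong1 imp_cong refl bex_cong) auto
  also have "\<dots> \<longleftrightarrow> degenerate (V - S) (induced (V - S) E) r"
    by (rule degenerate_induced_iff[symmetric]) blast
  finally show ?thesis .
qed

end
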